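(* Let $k_1,k_2,k_3\ge1$, let $G$ be the grid graph on $\{0,\dots,k_1\}\times\{0,\dots,k_2\}\times\{0,\dots,k_3\}$ (adjacency: differing by $1$ in exactly one coordinate), let $\mathcal B=\{B_1,\dots,B_m\}$ with $B_i=[a_i',a_i'']\times[b_i',b_i'']\times[c_i',c_i'']\subseteq\mathbb R^3$ boxes with integer endpoints $0\le a_i'<a_i''\le k_1$, $0\le b_i'<b_i''\le k_2$, $0\le c_i'<c_i''\le k_3$, and let $G_i$ be the subgraph of $G$ induced by the vertices in $B_i$. Let $\widetilde G$ be the graph with vertex set $V(G)\cup\{(u,i):1\le i\le m,\ u\in V(G_i)\}$ and edges: all edges of $G$; the edges $(u,i)(w,i)$ for $uw$ an edge of $G_i$; and the edges $u\,(u,i)$ for $u\in V(G_i)$. Let $\alpha=(0,0,0)$. Then $\chi(\Gamma(\widetilde G))\ge\chi(\Gamma_\alpha(\widetilde G))\ge\chi(\mathcal B)$.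
   Context: $\widetilde G$ is a median graph; $d$ is its graph distance. The Djoković–Winkler relation $\Theta$: $xy\,\Theta\,zw$ iff $d(x,z)+d(y,w)\ne d(x,w)+d(y,z)$, an equivalence relation on edges of a median graph. Two $\Theta$-classes cross if some 4-cycle has two opposite edges in one class and the other two in the other; they osculate if some edges $e$, $e'$, one from each class, share an endpoint and lie in no common 4-cycle. The contact graph $\Gamma(\widetilde G)$ has the $\Theta$-classes as vertices, distinct classes adjacent iff they cross or osculate. With edges directed from $x$ to $y$ iff $d(x,\alpha)<d(y,\alpha)$ (tail = origin), the pointed contact graph $\Gamma_\alpha(\widetilde G)$ has the same vertices, distinct classes adjacent iff they cross or osculate via two edges with a common origin. $\chi$ denotes chromatic number; $\chi(\mathcal B)$ is the chromatic number of the intersection graph of the boxes of $\mathcal B$ (boxes adjacent iff they intersect as subsets of $\mathbb R^3$). *)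

theory Defs
  imports Complex_Main
begin

definition gdist :: "('a \<Rightarrow> 'a \<Rightarrow> bool) \<Rightarrow> 'a \<Rightarrow> 'a \<Rightarrow> nat" where
  "gdist E x y = (LEAST n. \<exists>p. p 0 = x \<and> p n = y \<and> (\<forall>i<n. E (p i) (p (Suc i))))"

text \<open>Edges are ordered pairs (both orientations of an undirected edge occur).\<close>
definition gedges :: "('a \<Rightarrow> 'a \<Rightarrow> bool) \<Rightarrow> ('a \<times> 'a) set" where
  "gedges E = {(x, y). E x y}"

definition theta :: "('a \<Rightarrow> 'a \<Rightarrow> bool) \<Rightarrow> 'a \<times> 'a \<Rightarrow> 'a \<times> 'a \<Rightarrow> bool" where
  "theta E e f = (case e of (x, y) \<Rightarrow> case f of (z, w) \<Rightarrow>
      gdist E x z + gdist E y w \<noteq> gdist E x w + gdist E y z)"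

definition theta_class :: "('a \<Rightarrow> 'a \<Rightarrow> bool) \<Rightarrow> 'a \<times> 'a \<Rightarrow> ('a \<times> 'a) set" where
  "theta_class E e = {f \<in> gedges E. theta E e f}"

definition theta_classes :: "('a \<Rightarrow> 'a \<Rightarrow> bool) \<Rightarrow> ('a \<times> 'a) set set" where
  "theta_classes E = theta_class E ` gedges E"

definition cross :: "('a \<Rightarrow> 'a \<Rightarrow> bool) \<Rightarrow> ('a \<times> 'a) set \<Rightarrow> ('a \<times> 'a) set \<Rightarrow> bool" where
  "cross E C1 C2 = (\<exists>x1 x2 x3 x4. distinct [x1, x2, x3, x4] \<and>
      E x1 x2 \<and> E x2 x3 \<and> E x3 x4 \<and> E x4 x1 \<and>
      (x1, x2) \<in> C1 \<and> (x3, x4) \<in> C1 \<and> (x2, x3) \<in> C2 \<and> (x4, x1) \<in> C2)"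

definition common_square :: "('a \<Rightarrow> 'a \<Rightarrow> bool) \<Rightarrow> 'a \<Rightarrow> 'a \<Rightarrow> 'a \<Rightarrow> bool" where
  "common_square E u v w = (\<exists>x. distinct [u, v, x, w] \<and> E u v \<and> E v x \<and> E x w \<and> E w u)"

definition osculate :: "('a \<Rightarrow> 'a \<Rightarrow> bool) \<Rightarrow> ('a \<times> 'a) set \<Rightarrow> ('a \<times> 'a) set \<Rightarrow> bool" where
  "osculate E C1 C2 = (\<exists>u v w. (u, v) \<in> C1 \<and> (u, w) \<in> C2 \<and> E u v \<and> E u w \<and>
      \<not> common_square E u v w)"

definition osculate_pointed ::
  "('a \<Rightarrow> 'a \<Rightarrow> bool) \<Rightarrow> 'a \<Rightarrow> ('a \<times> 'a) set \<Rightarrow> ('a \<times> 'a) set \<Rightarrow> bool" where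
  "osculate_pointed E a C1 C2 = (\<exists>u v w. (u, v) \<in> C1 \<and> (u, w) \<in> C2 \<and> E u v \<and> E u w \<and>
      gdist E u a < gdist E v a \<and> gdist E u a < gdist E w a \<and>
      \<not> common_square E u v w)"

definition contact_adj :: "('a \<Rightarrow> 'a \<Rightarrow> bool) \<Rightarrow> ('a \<times> 'a) set \<Rightarrow> ('a \<times> 'a) set \<Rightarrow> bool" where
  "contact_adj E C1 C2 = (C1 \<noteq> C2 \<and> (cross E C1 C2 \<or> osculate E C1 C2))"

definition pointed_contact_adj ::
  "('a \<Rightarrow> 'a \<Rightarrow> bool) \<Rightarrow> 'a \<Rightarrow> ('a \<times> 'a) set \<Rightarrow> ('a \<times> 'a) set \<Rightarrow> bool" where
  "pointed_contact_adj E a C1 C2 = (C1 \<noteq> C2 \<and> (cross E C1 C2 \<or> osculate_pointed E a C1 C2))"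

definition chromatic :: "'v set \<Rightarrow> ('v \<Rightarrow> 'v \<Rightarrow> bool) \<Rightarrow> nat" where
  "chromatic V A = (LEAST k. \<exists>c :: 'v \<Rightarrow> nat. (\<forall>v\<in>V. c v < k) \<and>
      (\<forall>u\<in>V. \<forall>v\<in>V. A u v \<longrightarrow> c u \<noteq> c v))"

type_synonym pt = "int \<times> int \<times> int"

definition grid_adj :: "pt \<Rightarrow> pt \<Rightarrow> bool" where
  "grid_adj p q = (case p of (x1, y1, z1) \<Rightarrow> case q of (x2, y2, z2) \<Rightarrow>
      (\<bar>x1 - x2\<bar> = 1 \<and> y1 = y2 \<and> z1 = z2) \<or>
      (x1 = x2 \<and> \<bar>y1 - y2\<bar> = 1 \<and> z1 = z2) \<or>
      (x1 = x2 \<and> y1 = y2 \<and> \<bar>z1 - z2\<bar> = 1))"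

definition in_grid :: "int \<Rightarrow> int \<Rightarrow> int \<Rightarrow> pt \<Rightarrow> bool" where
  "in_grid k1 k2 k3 p = (case p of (x, y, z) \<Rightarrow>
      0 \<le> x \<and> x \<le> k1 \<and> 0 \<le> y \<and> y \<le> k2 \<and> 0 \<le> z \<and> z \<le> k3)"

definition in_box :: "(nat \<Rightarrow> int) \<Rightarrow> (nat \<Rightarrow> int) \<Rightarrow> (nat \<Rightarrow> int) \<Rightarrow> (nat \<Rightarrow> int) \<Rightarrow>
    (nat \<Rightarrow> int) \<Rightarrow> (nat \<Rightarrow> int) \<Rightarrow> nat \<Rightarrow> pt \<Rightarrow> bool" where
  "in_box a1 a2 b1 b2 c1 c2 i p = (case p of (x, y, z) \<Rightarrow>
      a1 i \<le> x \<and> x \<le> a2 i \<and> b1 i \<le> y \<and> y \<le> b2 i \<and> c1 i \<le> z \<and> z \<le> c2 i)"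

definition real_box :: "(nat \<Rightarrow> int) \<Rightarrow> (nat \<Rightarrow> int) \<Rightarrow> (nat \<Rightarrow> int) \<Rightarrow> (nat \<Rightarrow> int) \<Rightarrow>
    (nat \<Rightarrow> int) \<Rightarrow> (nat \<Rightarrow> int) \<Rightarrow> nat \<Rightarrow> (real \<times> real \<times> real) set" where
  "real_box a1 a2 b1 b2 c1 c2 i = {(x, y, z).
      of_int (a1 i) \<le> x \<and> x \<le> of_int (a2 i) \<and>
      of_int (b1 i) \<le> y \<and> y \<le> of_int (b2 i) \<and>
      of_int (c1 i) \<le> z \<and> z \<le> of_int (c2 i)}"

text \<open>Vertices of G-tilde: (u, 0) stands for u \<in> V(G), and (u, i) with 1 \<le> i \<le> m
  for the copy (u,i) of u \<in> V(G_i).\<close>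
definition Gt_adj :: "int \<Rightarrow> int \<Rightarrow> int \<Rightarrow> nat \<Rightarrow> (nat \<Rightarrow> int) \<Rightarrow> (nat \<Rightarrow> int) \<Rightarrow>
    (nat \<Rightarrow> int) \<Rightarrow> (nat \<Rightarrow> int) \<Rightarrow> (nat \<Rightarrow> int) \<Rightarrow> (nat \<Rightarrow> int) \<Rightarrow>
    pt \<times> nat \<Rightarrow> pt \<times> nat \<Rightarrow> bool" where
  "Gt_adj k1 k2 k3 m a1 a2 b1 b2 c1 c2 v w = (case v of (p, i) \<Rightarrow> case w of (q, j) \<Rightarrow>
      (i = 0 \<and> j = 0 \<and> in_grid k1 k2 k3 p \<and> in_grid k1 k2 k3 q \<and> grid_adj p q) \<or>
      (1 \<le> i \<and> i \<le> m \<and> j = i \<and> in_box a1 a2 b1 b2 c1 c2 i p \<and>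
         in_box a1 a2 b1 b2 c1 c2 i q \<and> grid_adj p q) \<or>
      (p = q \<and> i = 0 \<and> 1 \<le> j \<and> j \<le> m \<and> in_box a1 a2 b1 b2 c1 c2 j p) \<or>
      (p = q \<and> j = 0 \<and> 1 \<le> i \<and> i \<le> m \<and> in_box a1 a2 b1 b2 c1 c2 i p))"

end

theory Submission
  imports Defs
begin

text \<open>
  Distances in \<open>G\<close>-tilde are the l1 distance of the underlying lattice points plus the number
  of layer changes (0, 1 or 2): walks inside the layers realise this value, and a 1-Lipschitz
  potential bounds it from below.  Consequently, for each box i the "vertical" edges u (u, i)
  with u \<in> B_i form a single \<Theta>-class C_i, and distinct boxes give distinct classes.
  If B_i and B_j meet, they share a lattice point u; the edges u (u, i) and u (u, j) both have
  origin u with respect to \<alpha> and lie in no common 4-cycle, so C_i and C_j are adjacent in the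
  pointed contact graph.  Hence i \<mapsto> C_i is a homomorphism from the intersection graph of the
  boxes into \<Gamma>_\<alpha>, which in turn is a subgraph of \<Gamma> on the same vertex set.
\<close>

lemma gdist_eq_Least_relpowp: "gdist E x y = (LEAST n. (E ^^ n) x y)"
  by (simp add: gdist_def relpowp_fun_conv)

lemma gdist_le_relpowp: "(E ^^ n) x y \<Longrightarrow> gdist E x y \<le> n"
  unfolding gdist_eq_Least_relpowp by (rule Least_le)

lemma gdist_relpowp: "(E ^^ n) x y \<Longrightarrow> (E ^^ gdist E x y) x y"
  unfolding gdist_eq_Least_relpowp by (rule LeastI)

lemma relpowp_lipschitz_bound:
  assumes "\<And>v w. E v w \<Longrightarrow> \<bar>f v - f w\<bar> \<le> (1::int)"
  shows "(E ^^ n) x y \<Longrightarrow> \<bar>f y - f x\<bar> \<le> int n"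
proof (induction n arbitrary: y)
  case 0
  then show ?case by (auto elim: relpowp_0_E)
next
  case (Suc n)
  then obtain z where "(E ^^ n) x z" "E z y" by (auto elim: relpowp_Suc_E)
  with Suc.IH assms[of z y] show ?case by force
qed

lemma gdist_eq_if_lipschitz_potential:
  assumes walk: "(E ^^ n) x y"
    and lipschitz: "\<And>v w. E v w \<Longrightarrow> \<bar>f v - f w\<bar> \<le> (1::int)"
    and gap: "f y - f x = int n"
  shows "gdist E x y = n"
  using gdist_le_relpowp[OF walk] relpowp_lipschitz_bound[of E f, OF lipschitz gdist_relpowp[OF walk]] gap
  by linarith

lemma chromatic_le_hom:
  assumes "finite V'" and "\<And>v. \<not> A' v v" and "h ` V \<subseteq> V'"
    and "\<And>u v. u \<in> V \<Longrightarrow> v \<in> V \<Longrightarrow> A u v \<Longrightarrow> A' (h u) (h v)"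
  shows "chromatic V A \<le> chromatic V' A'"
proof -
  let ?colouring = "\<lambda>V A k. \<exists>c :: _ \<Rightarrow> nat. (\<forall>v\<in>V. c v < k) \<and> (\<forall>u\<in>V. \<forall>v\<in>V. A u v \<longrightarrow> c u \<noteq> c v)"
  obtain g where "bij_betw g V' {0..<card V'}"
    using ex_bij_betw_finite_nat[OF assms(1)] by blast
  then have "?colouring V' A' (card V')"
    using assms(2) unfolding bij_betw_def inj_on_def by (intro exI[of _ g]) auto
  then have "?colouring V' A' (chromatic V' A')"
    unfolding chromatic_def by (rule LeastI)
  then obtain c where "\<forall>v\<in>V'. c v < chromatic V' A'"
    "\<forall>u\<in>V'. \<forall>v\<in>V'. A' u v \<longrightarrow> c u \<noteq> c v" by blast
  with assms(3,4) have "?colouring V A (chromatic V' A')"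
    by (intro exI[of _ "c \<circ> h"]) (auto simp: image_subset_iff)
  then show ?thesis
    unfolding chromatic_def by (rule Least_le)
qed

definition l1_dist :: "pt \<Rightarrow> pt \<Rightarrow> int" where
  "l1_dist p q = (case p of (x1, y1, z1) \<Rightarrow> case q of (x2, y2, z2) \<Rightarrow>
      \<bar>x1 - x2\<bar> + \<bar>y1 - y2\<bar> + \<bar>z1 - z2\<bar>)"

definition lattice_box :: "pt \<Rightarrow> pt \<Rightarrow> pt \<Rightarrow> bool" where
  "lattice_box lo hi p = (case lo of (l1, l2, l3) \<Rightarrow> case hi of (h1, h2, h3) \<Rightarrow>
      case p of (x, y, z) \<Rightarrow> l1 \<le> x \<and> x \<le> h1 \<and> l2 \<le> y \<and> y \<le> h2 \<and> l3 \<le> z \<and> z \<le> h3)"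

lemma l1_dist_commute: "l1_dist p q = l1_dist q p"
  by (auto simp: l1_dist_def split: prod.splits)

lemma l1_dist_nonneg: "l1_dist p q \<ge> 0"
  by (auto simp: l1_dist_def split: prod.splits)

lemma l1_dist_eq_0_iff: "l1_dist p q = 0 \<longleftrightarrow> p = q"
  by (auto simp: l1_dist_def split: prod.splits)

lemma l1_dist_self [simp]: "l1_dist p p = 0"
  by (simp add: l1_dist_eq_0_iff)

lemma grid_adj_sym: "grid_adj p q \<Longrightarrow> grid_adj q p"
  by (auto simp: grid_adj_def split: prod.splits)

lemma l1_dist_grid_adj: "grid_adj p q \<Longrightarrow> \<bar>l1_dist p r - l1_dist q r\<bar> \<le> 1"
  by (auto simp: grid_adj_def l1_dist_def split: prod.splits)

lemma lattice_box_step_towards: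
  assumes "lattice_box lo hi p" "lattice_box lo hi q" "p \<noteq> q"
  obtains q' where "lattice_box lo hi q'" "grid_adj q' q" "l1_dist p q' = l1_dist p q - 1"
proof -
  obtain x1 y1 z1 x2 y2 z2 where pq: "p = (x1, y1, z1)" "q = (x2, y2, z2)"
    by (cases p, cases q) auto
  obtain l1 l2 l3 h1 h2 h3 where bounds: "lo = (l1, l2, l3)" "hi = (h1, h2, h3)"
    by (cases lo, cases hi) auto
  have box: "l1 \<le> x1" "x1 \<le> h1" "l2 \<le> y1" "y1 \<le> h2" "l3 \<le> z1" "z1 \<le> h3"
    "l1 \<le> x2" "x2 \<le> h1" "l2 \<le> y2" "y2 \<le> h2" "l3 \<le> z2" "z2 \<le> h3"
    using assms(1,2) by (simp_all add: pq bounds lattice_box_def)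
  note defs = pq bounds lattice_box_def l1_dist_def grid_adj_def abs_if
  consider "x1 < x2" | "x1 > x2" | "x1 = x2" "y1 < y2" | "x1 = x2" "y1 > y2"
    | "x1 = x2" "y1 = y2" "z1 < z2" | "x1 = x2" "y1 = y2" "z1 > z2"
    using assms(3) pq by fastforce
  then show ?thesis
  proof cases
    case 1 then show ?thesis using box by (intro that[of "(x2 - 1, y2, z2)"]) (simp_all add: defs)
  next
    case 2 then show ?thesis using box by (intro that[of "(x2 + 1, y2, z2)"]) (simp_all add: defs)
  next
    case 3 then show ?thesis using box by (intro that[of "(x2, y2 - 1, z2)"]) (simp_all add: defs)
  next
    case 4 then show ?thesis using box by (intro that[of "(x2, y2 + 1, z2)"]) (simp_all add: defs)
  next
    case 5 then show ?thesis using box by (intro that[of "(x2, y2, z2 - 1)"]) (simp_all add: defs)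
  next
    case 6 then show ?thesis using box by (intro that[of "(x2, y2, z2 + 1)"]) (simp_all add: defs)
  qed
qed

lemma lattice_box_relpowp_l1_dist:
  assumes adj: "\<And>p q. lattice_box lo hi p \<Longrightarrow> lattice_box lo hi q \<Longrightarrow> grid_adj p q \<Longrightarrow> R (g p) (g q)"
  shows "lattice_box lo hi p \<Longrightarrow> lattice_box lo hi q \<Longrightarrow> (R ^^ nat (l1_dist p q)) (g p) (g q)"
proof (induction "nat (l1_dist p q)" arbitrary: q)
  case 0
  then have "l1_dist p q = 0" using l1_dist_nonneg[of p q] by linarith
  then have "p = q" by (simp add: l1_dist_eq_0_iff)
  then show ?case by (simp add: relpowp_0_I)
next
  case (Suc n)
  then have "p \<noteq> q" by (auto simp: l1_dist_eq_0_iff)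
  with Suc.prems obtain q' where q': "lattice_box lo hi q'" "grid_adj q' q"
    "l1_dist p q' = l1_dist p q - 1" by (rule lattice_box_step_towards)
  with Suc.hyps(2) have "n = nat (l1_dist p q')" by linarith
  then have "(R ^^ n) (g p) (g q')" using Suc.hyps(1) Suc.prems(1) q'(1) by simp
  then show ?case
    unfolding Suc.hyps(2)[symmetric] using adj[OF q'(1) Suc.prems(2) q'(2)] by (rule relpowp_Suc_I)
qed

lemma chromatic_pointed_contact_le_contact:
  assumes "finite (theta_classes E)"
  shows "chromatic (theta_classes E) (pointed_contact_adj E a) \<le> chromatic (theta_classes E) (contact_adj E)"
  by (rule chromatic_le_hom[where h = id, OF assms])
    (auto simp: contact_adj_def pointed_contact_adj_def osculate_def osculate_pointed_def)

text \<open>Copies of distinct boxes are joined only through the base layer 0, so a shortest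
  path from layer i to layer j changes layer this many times.\<close>
definition layer_hops :: "nat \<Rightarrow> nat \<Rightarrow> nat" where
  "layer_hops i j = (if i = j then 0 else if i = 0 \<or> j = 0 then 1 else 2)"

locale grid_with_boxes =
  fixes k1 k2 k3 :: int and m :: nat and a1 a2 b1 b2 c1 c2 :: "nat \<Rightarrow> int"
  assumes a_bounds: "\<forall>i\<in>{1..m}. 0 \<le> a1 i \<and> a1 i < a2 i \<and> a2 i \<le> k1"
    and b_bounds: "\<forall>i\<in>{1..m}. 0 \<le> b1 i \<and> b1 i < b2 i \<and> b2 i \<le> k2"
    and c_bounds: "\<forall>i\<in>{1..m}. 0 \<le> c1 i \<and> c1 i < c2 i \<and> c2 i \<le> k3"
begin

abbreviation E :: "pt \<times> nat \<Rightarrow> pt \<times> nat \<Rightarrow> bool" where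
  "E \<equiv> Gt_adj k1 k2 k3 m a1 a2 b1 b2 c1 c2"

definition in_layer :: "nat \<Rightarrow> pt \<Rightarrow> bool" where
  "in_layer i p = (if i = 0 then in_grid k1 k2 k3 p else in_box a1 a2 b1 b2 c1 c2 i p)"

definition layer_lo :: "nat \<Rightarrow> pt" where
  "layer_lo i = (if i = 0 then (0, 0, 0) else (a1 i, b1 i, c1 i))"

definition layer_hi :: "nat \<Rightarrow> pt" where
  "layer_hi i = (if i = 0 then (k1, k2, k3) else (a2 i, b2 i, c2 i))"

lemma in_layer_eq_lattice_box: "in_layer i p = lattice_box (layer_lo i) (layer_hi i) p"
  by (cases p; cases "i = 0")
    (simp_all add: in_layer_def layer_lo_def layer_hi_def in_grid_def in_box_def lattice_box_def)

lemma box_bounds: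
  assumes "1 \<le> i" "i \<le> m"
  shows "0 \<le> a1 i" "a1 i < a2 i" "a2 i \<le> k1" "0 \<le> b1 i" "b1 i < b2 i" "b2 i \<le> k2"
    "0 \<le> c1 i" "c1 i < c2 i" "c2 i \<le> k3"
  using bspec[OF a_bounds] bspec[OF b_bounds] bspec[OF c_bounds] assms by auto

lemma in_layer_imp_in_grid:
  assumes "i \<le> m" "in_layer i p" shows "in_layer 0 p"
proof (cases "i = 0")
  case False
  obtain x y z where "p = (x, y, z)" by (cases p)
  with False assms box_bounds[of i] show ?thesis
    by (simp add: in_layer_def in_grid_def in_box_def)
qed (use assms in simp)

lemma layer_lo_in_layer: "1 \<le> i \<Longrightarrow> i \<le> m \<Longrightarrow> in_layer i (layer_lo i)"
  using box_bounds[of i] by (simp add: in_layer_def in_box_def layer_lo_def)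

lemma E_within_layer: "i \<le> m \<Longrightarrow> in_layer i p \<Longrightarrow> in_layer i q \<Longrightarrow> grid_adj p q \<Longrightarrow> E (p, i) (q, i)"
  by (cases "i = 0") (simp_all add: Gt_adj_def in_layer_def)

lemma E_vertical: "1 \<le> i \<Longrightarrow> i \<le> m \<Longrightarrow> in_layer i p \<Longrightarrow> E (p, 0) (p, i) \<and> E (p, i) (p, 0)"
  by (simp add: Gt_adj_def in_layer_def)

lemma E_cases: "E (p, i) (q, j) \<Longrightarrow> (i = j \<and> grid_adj p q) \<or> (p = q \<and> (i = 0 \<or> j = 0))"
  by (auto simp: Gt_adj_def)

lemma E_source:
  assumes "E (p, i) (q, j)" shows "i \<le> m \<and> in_layer 0 p"
proof -
  have "in_grid k1 k2 k3 p" if "1 \<le> l" "l \<le> m" "in_box a1 a2 b1 b2 c1 c2 l p" for l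
    using in_layer_imp_in_grid[of l p] that by (simp add: in_layer_def)
  with assms show ?thesis
    unfolding Gt_adj_def prod.case in_layer_def by (elim disjE) auto
qed

lemma E_sym: "E v w \<Longrightarrow> E w v"
  unfolding Gt_adj_def by (auto split: prod.splits intro: grid_adj_sym)

lemma finite_theta_classes: "finite (theta_classes E)"
proof -
  let ?V = "({0..k1} \<times> {0..k2} \<times> {0..k3}) \<times> {..m}"
  have "v \<in> ?V" if "E v w" for v w
    using E_source[of "fst v" "snd v" "fst w" "snd w"] that
    by (cases v) (auto simp: in_layer_def in_grid_def)
  then have "gedges E \<subseteq> ?V \<times> ?V"
    by (auto simp: gedges_def dest: E_sym)
  then have "finite (gedges E)"
    by (rule finite_subset) auto
  then show ?thesis
    by (simp add: theta_classes_def)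
qed

lemma relpowp_E_within_layer:
  assumes "i \<le> m" "in_layer i p" "in_layer i q"
  shows "(E ^^ nat (l1_dist p q)) (p, i) (q, i)"
proof -
  have "(E ^^ nat (l1_dist p q)) ((\<lambda>p. (p, i)) p) ((\<lambda>p. (p, i)) q)"
    by (rule lattice_box_relpowp_l1_dist[of "layer_lo i" "layer_hi i"])
      (use assms in \<open>simp_all add: E_within_layer flip: in_layer_eq_lattice_box\<close>)
  then show ?thesis by simp
qed

lemma relpowp_E_between_layers:
  assumes "i \<le> m" "j \<le> m" "in_layer i p" "in_layer j q"
  shows "(E ^^ (nat (l1_dist p q) + layer_hops i j)) (p, i) (q, j)"
proof (cases "i = j")
  case True
  with assms relpowp_E_within_layer show ?thesis by (simp add: layer_hops_def)
next
  case False
  define down where "down = (if i = 0 then 0 else 1 :: nat)"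
  define up where "up = (if j = 0 then 0 else 1 :: nat)"
  have "(E ^^ down) (p, i) (p, 0)"
    using E_vertical[of i p] assms(1,3) by (auto simp: down_def)
  moreover have "(E ^^ nat (l1_dist p q)) (p, 0) (q, 0)"
    using relpowp_E_within_layer in_layer_imp_in_grid assms by blast
  moreover have "(E ^^ up) (q, 0) (q, j)"
    using E_vertical[of j q] assms(2,4) by (auto simp: up_def)
  ultimately have "(E ^^ (down + nat (l1_dist p q) + up)) (p, i) (q, j)"
    unfolding relpowp_add by blast
  moreover have "down + nat (l1_dist p q) + up = nat (l1_dist p q) + layer_hops i j"
    using False by (simp add: down_def up_def layer_hops_def)
  ultimately show ?thesis by simp
qed

lemma layer_potential_lipschitz:
  assumes "\<And>k. \<bar>\<phi> 0 - \<phi> k\<bar> \<le> (1::int)" and "E v w"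
  shows "\<bar>(l1_dist (fst v) r + \<phi> (snd v)) - (l1_dist (fst w) r + \<phi> (snd w))\<bar> \<le> 1"
proof -
  obtain p i q j where vw: "v = (p, i)" "w = (q, j)" by (cases v, cases w)
  from E_cases[of p i q j] assms(2)
  consider "i = j" "grid_adj p q" | "p = q" "i = 0" | "p = q" "j = 0"
    unfolding vw by blast
  then show ?thesis
  proof cases
    case 1
    then show ?thesis using l1_dist_grid_adj[of p q r] by (simp add: vw)
  next
    case 2
    then show ?thesis using assms(1)[of j] by (simp add: vw)
  next
    case 3
    then show ?thesis using assms(1)[of i] by (simp add: vw abs_minus_commute)
  qed
qed

lemma gdist_E_between_layers:
  assumes "i \<le> m" "j \<le> m" "in_layer i p" "in_layer j q"
  shows "gdist E (p, i) (q, j) = nat (l1_dist p q) + layer_hops i j"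
proof (rule gdist_eq_if_lipschitz_potential[OF relpowp_E_between_layers[OF assms]])
  let ?f = "\<lambda>v. l1_dist (fst v) p + int (layer_hops i (snd v))"
  show "\<bar>?f v - ?f w\<bar> \<le> 1" if "E v w" for v w
    by (rule layer_potential_lipschitz[OF _ that]) (simp add: layer_hops_def)
  show "?f (q, j) - ?f (p, i) = int (nat (l1_dist p q) + layer_hops i j)"
    using l1_dist_nonneg[of p q] by (simp add: l1_dist_commute layer_hops_def)
qed

definition vertical_class :: "nat \<Rightarrow> ((pt \<times> nat) \<times> (pt \<times> nat)) set" where
  "vertical_class i = theta_class E ((layer_lo i, 0), (layer_lo i, i))"

lemma theta_vertical_edges_iff:
  assumes "1 \<le> i" "i \<le> m" "1 \<le> j" "j \<le> m" "in_layer i u" "in_layer j w"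
  shows "theta E ((u, 0), (u, i)) ((w, 0), (w, j)) \<longleftrightarrow> i = j"
proof -
  have "in_layer 0 u" "in_layer 0 w"
    using in_layer_imp_in_grid assms by blast+
  with assms show ?thesis
    by (simp add: theta_def gdist_E_between_layers layer_hops_def)
qed

lemma vertical_edge_in_class:
  assumes "1 \<le> i" "i \<le> m" "in_layer i u"
  shows "((u, 0), (u, i)) \<in> vertical_class i"
  using assms E_vertical layer_lo_in_layer theta_vertical_edges_iff
  by (simp add: vertical_class_def theta_class_def gedges_def)

lemma vertical_class_in_theta_classes: "1 \<le> i \<Longrightarrow> i \<le> m \<Longrightarrow> vertical_class i \<in> theta_classes E"
  using E_vertical layer_lo_in_layer
  by (auto simp: vertical_class_def theta_classes_def gedges_def)

lemma vertical_class_neq: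
  assumes "1 \<le> i" "i \<le> m" "1 \<le> j" "j \<le> m" "i \<noteq> j"
  shows "vertical_class i \<noteq> vertical_class j"
proof
  assume "vertical_class i = vertical_class j"
  with vertical_edge_in_class[OF assms(1,2) layer_lo_in_layer[OF assms(1,2)]]
  have "((layer_lo i, 0), (layer_lo i, i)) \<in> vertical_class j" by simp
  then have "theta E ((layer_lo j, 0), (layer_lo j, j)) ((layer_lo i, 0), (layer_lo i, i))"
    by (simp add: vertical_class_def theta_class_def)
  with assms layer_lo_in_layer show False
    by (simp add: theta_vertical_edges_iff)
qed

lemma vertical_edges_no_common_square:
  assumes "1 \<le> i" "1 \<le> j" "i \<noteq> j"
  shows "\<not> common_square E (u, 0) (u, i) (u, j)"
proof
  assume "common_square E (u, 0) (u, i) (u, j)"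
  then obtain x where x: "distinct [(u, 0), (u, i), x, (u, j)]" "E (u, i) x" "E x (u, j)"
    unfolding common_square_def by blast
  obtain q l where "x = (q, l)" by (cases x)
  with E_cases[of u i q l] E_cases[of q l u j] x(2,3) assms have "x = (u, 0)" by auto
  with x(1) show False by simp
qed

lemma pointed_contact_adj_vertical_classes:
  assumes "1 \<le> i" "i \<le> m" "1 \<le> j" "j \<le> m" "i \<noteq> j" "in_layer i u" "in_layer j u"
  shows "pointed_contact_adj E ((0, 0, 0), 0) (vertical_class i) (vertical_class j)"
proof -
  have "in_layer 0 u" using in_layer_imp_in_grid assms(2,6) .
  moreover have "in_layer 0 (0, 0, 0)"
    using box_bounds[OF assms(1,2)] by (simp add: in_layer_def in_grid_def)
  ultimately have closer: "gdist E (u, 0) ((0, 0, 0), 0) < gdist E (u, l) ((0, 0, 0), 0)"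
    if "1 \<le> l" "l \<le> m" "in_layer l u" for l
    using that by (simp add: gdist_E_between_layers layer_hops_def)
  have "osculate_pointed E ((0, 0, 0), 0) (vertical_class i) (vertical_class j)"
    unfolding osculate_pointed_def
    by (intro exI[of _ "(u, 0)"] exI[of _ "(u, i)"] exI[of _ "(u, j)"] conjI
        vertical_edge_in_class closer vertical_edges_no_common_square E_vertical[THEN conjunct1])
      (use assms in simp_all)
  with vertical_class_neq[OF assms(1-5)] show ?thesis
    by (simp add: pointed_contact_adj_def)
qed

lemma real_boxes_meet_imp_common_lattice_point:
  assumes "1 \<le> i" "i \<le> m" "1 \<le> j" "j \<le> m"
    and "real_box a1 a2 b1 b2 c1 c2 i \<inter> real_box a1 a2 b1 b2 c1 c2 j \<noteq> {}"
  obtains u where "in_layer i u" "in_layer j u"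
proof -
  obtain x y z where "(x, y, z) \<in> real_box a1 a2 b1 b2 c1 c2 i" "(x, y, z) \<in> real_box a1 a2 b1 b2 c1 c2 j"
    using assms(5) by auto
  then have "real_of_int (a1 i) \<le> of_int (a2 j)" "real_of_int (a1 j) \<le> of_int (a2 i)"
    "real_of_int (b1 i) \<le> of_int (b2 j)" "real_of_int (b1 j) \<le> of_int (b2 i)"
    "real_of_int (c1 i) \<le> of_int (c2 j)" "real_of_int (c1 j) \<le> of_int (c2 i)"
    unfolding real_box_def by auto
  then have "a1 i \<le> a2 j" "a1 j \<le> a2 i" "b1 i \<le> b2 j" "b1 j \<le> b2 i" "c1 i \<le> c2 j" "c1 j \<le> c2 i"
    by simp_all
  with box_bounds[OF assms(1,2)] box_bounds[OF assms(3,4)] assms show ?thesis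
    by (intro that[of "(max (a1 i) (a1 j), max (b1 i) (b1 j), max (c1 i) (c1 j))"])
      (simp_all add: in_layer_def in_box_def)
qed

lemma chromatic_boxes_le_pointed_contact:
  "chromatic (real_box a1 a2 b1 b2 c1 c2 ` {1..m}) (\<lambda>B B'. B \<noteq> B' \<and> B \<inter> B' \<noteq> {})
     \<le> chromatic (theta_classes E) (pointed_contact_adj E ((0, 0, 0), 0))"
proof (rule chromatic_le_hom[OF finite_theta_classes])
  let ?box = "real_box a1 a2 b1 b2 c1 c2"
  let ?index = "inv_into {1..m} ?box"
  show "(vertical_class \<circ> ?index) ` (?box ` {1..m}) \<subseteq> theta_classes E"
  proof (rule image_subsetI)
    fix B assume "B \<in> ?box ` {1..m}"
    then have "?index B \<in> {1..m}" by (rule inv_into_into)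
    then show "(vertical_class \<circ> ?index) B \<in> theta_classes E"
      by (simp add: vertical_class_in_theta_classes)
  qed
  show "pointed_contact_adj E ((0, 0, 0), 0) ((vertical_class \<circ> ?index) B) ((vertical_class \<circ> ?index) B')"
    if "B \<in> ?box ` {1..m}" "B' \<in> ?box ` {1..m}" "B \<noteq> B' \<and> B \<inter> B' \<noteq> {}" for B B'
  proof -
    define i j where "i = ?index B" and "j = ?index B'"
    have "i \<in> {1..m}" "j \<in> {1..m}" "?box i = B" "?box j = B'"
      using that(1,2) unfolding i_def j_def by (simp_all only: inv_into_into f_inv_into_f)
    with that(3) have ij: "1 \<le> i" "i \<le> m" "1 \<le> j" "j \<le> m" "i \<noteq> j" "?box i \<inter> ?box j \<noteq> {}"
      by auto
    obtain u where "in_layer i u" "in_layer j u"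
      by (rule real_boxes_meet_imp_common_lattice_point[OF ij(1-4,6)])
    with ij have "pointed_contact_adj E ((0, 0, 0), 0) (vertical_class i) (vertical_class j)"
      by (intro pointed_contact_adj_vertical_classes)
    then show ?thesis by (simp add: i_def j_def)
  qed
qed (simp add: pointed_contact_adj_def)

end

theorem lemma5:
  fixes k1 k2 k3 :: int and m :: nat
    and a1 a2 b1 b2 c1 c2 :: "nat \<Rightarrow> int"
  assumes "k1 \<ge> 1" and "k2 \<ge> 1" and "k3 \<ge> 1"
    and "\<forall>i\<in>{1..m}. 0 \<le> a1 i \<and> a1 i < a2 i \<and> a2 i \<le> k1"
    and "\<forall>i\<in>{1..m}. 0 \<le> b1 i \<and> b1 i < b2 i \<and> b2 i \<le> k2"
    and "\<forall>i\<in>{1..m}. 0 \<le> c1 i \<and> c1 i < c2 i \<and> c2 i \<le> k3"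
  defines "E \<equiv> Gt_adj k1 k2 k3 m a1 a2 b1 b2 c1 c2"
    and "\<alpha> \<equiv> ((0, 0, 0), 0)"
    and "Boxes \<equiv> real_box a1 a2 b1 b2 c1 c2 ` {1..m}"
  shows "chromatic (theta_classes E) (contact_adj E)
           \<ge> chromatic (theta_classes E) (pointed_contact_adj E \<alpha>)
       \<and> chromatic (theta_classes E) (pointed_contact_adj E \<alpha>)
           \<ge> chromatic Boxes (\<lambda>B B'. B \<noteq> B' \<and> B \<inter> B' \<noteq> {})"
proof -
  interpret grid_with_boxes k1 k2 k3 m a1 a2 b1 b2 c1 c2
    using assms(4-6) by unfold_locales
  show ?thesis
    unfolding E_def \<alpha>_def Boxes_def
    using chromatic_pointed_contact_le_contact[OF finite_theta_classes]
      chromatic_boxes_le_pointed_contact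
    by simp
qed

end
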